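(* Let $M_K$ be an Oeljeklaus–Toma manifold as described in the context. For any point $x\in M_K$, the leaf $\mathcal L_x$ of the foliation $\mathcal F$ through $x$ is dense in the fiber $p^{-1}(p(x))$ (a real torus of dimension $m+1$). Equivalently, for any $t=(t_1,\dots,t_m)\in\mathbb{H}^{m-1}\times\mathbb{C}$, the set $\pi(\{(t_1,\dots,t_{m-1})\}\times\mathbb{C})$ is dense in the fiber of $p$ over $p(\pi(t))\in\mathbb{T}^{m-1}$.
   Context: Let $K$ be a number field of degree $n=s+2$ over $\mathbb{Q}$ with $s\ge 1$, having exactly $s$ real embeddings $\sigma_1,\dots,\sigma_s$ and exactly one pair of complex conjugate embeddings $\sigma_{s+1},\sigma_{s+2}=\overline{\sigma_{s+1}}$; put $m=s+1$. Let $O_K$ be its ring of integers and $O_K^{*,+}$ the group of units $a$ with $\sigma_i(a)>0$ for $1\le i\le s$. Let $G\subset O_K^{*,+}$ be an admissible subgroup, i.e. a subgroup of rank $s$ such that $\Lambda=\{(\log\sigma_1(a),\dots,\log\sigma_s(a)):a\in G\}$ is a full lattice in $\mathbb{R}^{m-1}$. With $\mathbb{H}$ the upper half plane, $b\in O_K$ acts on $\mathbb{H}^{m-1}\times\mathbb{C}$ by $z\mapsto z+(\sigma_1(b),\dots,\sigma_m(b))$ and $a\in G$ by $z\mapsto(\sigma_1(a)z_1,\dots,\sigma_m(a)z_m)$; the generated group $\Gamma=G\ltimes O_K$ acts freely and properly discontinuously and $M_K=(\mathbb{H}^{m-1}\times\mathbb{C})/\Gamma$ with covering map $\pi$. Write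 $z_j=x_j+\sqrt{-1}y_j$. The map $z\mapsto(\log y_1,\dots,\log y_{m-1})$ induces a fiber bundle projection $p:M_K\to\mathbb{T}^{m-1}=\mathbb{R}^{m-1}/\Lambda$ with fibers real tori $\mathbb{T}^{m+1}$. The foliation of $\mathbb{H}^{m-1}\times\mathbb{C}$ with leaves $\{z'\}\times\mathbb{C}$ is $\Gamma$-invariant and induces a nonsingular holomorphic foliation $\mathcal F$ on $M_K$ whose leaves are the images under $\pi$ of these leaves. *)

theory Defs
  imports "HOL-Analysis.Analysis" "HOL-Computational_Algebra.Polynomial"
begin

text \<open>The number field K is modelled as a subfield of the complex numbers
  (any number field admits such an embedding). Indices are 0-based:
  sigma 0, ..., sigma (s-1) are the real embeddings, sigma s and sigma (s+1)
  the pair of complex conjugate ones. Points of H^(m-1) x C (m = s+1) are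
  functions z :: nat => complex with z j in H for j < s, z s arbitrary and
  z j = 0 for j > s.\<close>

definition subfield_C :: "complex set \<Rightarrow> bool" where
  "subfield_C K \<longleftrightarrow> 0 \<in> K \<and> 1 \<in> K \<and>
     (\<forall>x\<in>K. \<forall>y\<in>K. x + y \<in> K \<and> x - y \<in> K \<and> x * y \<in> K) \<and>
     (\<forall>x\<in>K. x \<noteq> 0 \<longrightarrow> inverse x \<in> K)"

definition Q_degree :: "complex set \<Rightarrow> nat \<Rightarrow> bool" where
  "Q_degree K n \<longleftrightarrow> (\<exists>b :: nat \<Rightarrow> complex.
     (\<forall>i<n. b i \<in> K) \<and>
     (\<forall>q :: nat \<Rightarrow> rat. (\<Sum>i<n. of_rat (q i) * b i) = 0 \<longrightarrow> (\<forall>i<n. q i = 0)) \<and>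
     (\<forall>x\<in>K. \<exists>q :: nat \<Rightarrow> rat. x = (\<Sum>i<n. of_rat (q i) * b i)))"

text \<open>Field embedding K -> C (only its values on K matter).\<close>
definition field_embedding :: "complex set \<Rightarrow> (complex \<Rightarrow> complex) \<Rightarrow> bool" where
  "field_embedding K f \<longleftrightarrow> f 1 = 1 \<and>
     (\<forall>x\<in>K. \<forall>y\<in>K. f (x + y) = f x + f y \<and> f (x * y) = f x * f y)"

definition algebraic_integer :: "complex \<Rightarrow> bool" where
  "algebraic_integer x \<longleftrightarrow> (\<exists>p :: complex poly.
     lead_coeff p = 1 \<and> (\<forall>i. coeff p i \<in> \<int>) \<and> poly p x = 0)"

definition ring_of_integers :: "complex set \<Rightarrow> complex set" where
  "ring_of_integers K = {x \<in> K. algebraic_integer x}"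

definition units_of_OK :: "complex set \<Rightarrow> complex set" where
  "units_of_OK K = {a \<in> ring_of_integers K. a \<noteq> 0 \<and> inverse a \<in> ring_of_integers K}"

definition pos_units :: "complex set \<Rightarrow> (nat \<Rightarrow> complex \<Rightarrow> complex) \<Rightarrow> nat \<Rightarrow> complex set" where
  "pos_units K \<sigma> s = {a \<in> units_of_OK K. \<forall>j<s. \<sigma> j a \<in> \<real> \<and> Re (\<sigma> j a) > 0}"

definition OT_field :: "complex set \<Rightarrow> (nat \<Rightarrow> complex \<Rightarrow> complex) \<Rightarrow> nat \<Rightarrow> bool" where
  "OT_field K \<sigma> s \<longleftrightarrow> s \<ge> 1 \<and> subfield_C K \<and> Q_degree K (s + 2) \<and>
     (\<forall>j < s + 2. field_embedding K (\<sigma> j)) \<and>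
     (\<forall>i < s + 2. \<forall>j < s + 2. i \<noteq> j \<longrightarrow> (\<exists>x\<in>K. \<sigma> i x \<noteq> \<sigma> j x)) \<and>
     (\<forall>f. field_embedding K f \<longrightarrow> (\<exists>j < s + 2. \<forall>x\<in>K. f x = \<sigma> j x)) \<and>
     (\<forall>j < s. \<forall>x\<in>K. \<sigma> j x \<in> \<real>) \<and>
     (\<exists>x\<in>K. \<sigma> s x \<notin> \<real>) \<and>
     (\<forall>x\<in>K. \<sigma> (s + 1) x = cnj (\<sigma> s x))"

definition mult_subgroup :: "complex set \<Rightarrow> complex set \<Rightarrow> bool" where
  "mult_subgroup G U \<longleftrightarrow> G \<subseteq> U \<and> 1 \<in> G \<and>
     (\<forall>a\<in>G. \<forall>b\<in>G. a * b \<in> G) \<and> (\<forall>a\<in>G. inverse a \<in> G)"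

text \<open>G has rank r (G is torsion free here, so: free abelian of rank r).\<close>
definition free_rank :: "complex set \<Rightarrow> nat \<Rightarrow> bool" where
  "free_rank G r \<longleftrightarrow> (\<exists>u :: nat \<Rightarrow> complex. (\<forall>i<r. u i \<in> G) \<and>
     (\<forall>a\<in>G. \<exists>!k. k \<in> {..<r} \<rightarrow>\<^sub>E (UNIV :: int set) \<and> a = (\<Prod>i<r. u i powi k i)))"

text \<open>Vectors of R^d are functions nat => real vanishing at indices >= d.\<close>
definition full_lattice :: "nat \<Rightarrow> (nat \<Rightarrow> real) set \<Rightarrow> bool" where
  "full_lattice d L \<longleftrightarrow> (\<exists>v :: nat \<Rightarrow> nat \<Rightarrow> real.
     (\<forall>i<d. \<forall>j\<ge>d. v i j = 0) \<and>
     (\<forall>c :: nat \<Rightarrow> real. (\<forall>j<d. (\<Sum>i<d. c i * v i j) = 0) \<longrightarrow> (\<forall>i<d. c i = 0)) \<and>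
     L = {(\<lambda>j. \<Sum>i<d. of_int (k i) * v i j) | k :: nat \<Rightarrow> int. True})"

definition log_map :: "(nat \<Rightarrow> complex \<Rightarrow> complex) \<Rightarrow> nat \<Rightarrow> complex \<Rightarrow> nat \<Rightarrow> real" where
  "log_map \<sigma> s a = (\<lambda>j. if j < s then ln (Re (\<sigma> j a)) else 0)"

definition Lambda :: "(nat \<Rightarrow> complex \<Rightarrow> complex) \<Rightarrow> nat \<Rightarrow> complex set \<Rightarrow> (nat \<Rightarrow> real) set" where
  "Lambda \<sigma> s G = log_map \<sigma> s ` G"

definition admissible :: "complex set \<Rightarrow> (nat \<Rightarrow> complex \<Rightarrow> complex) \<Rightarrow> nat \<Rightarrow> complex set \<Rightarrow> bool" where
  "admissible K \<sigma> s G \<longleftrightarrow> mult_subgroup G (pos_units K \<sigma> s) \<and> free_rank G s \<and>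
     full_lattice s (Lambda \<sigma> s G)"

definition OT_domain :: "nat \<Rightarrow> (nat \<Rightarrow> complex) set" where
  "OT_domain s = {z. (\<forall>j<s. Im (z j) > 0) \<and> (\<forall>j>s. z j = 0)}"

text \<open>Element (a,b) of Gamma = G \<ltimes> O_K acting by z \<mapsto> a z + b (every element
  of the group generated by the translations and the multiplications has this form).\<close>
definition gamma_act :: "(nat \<Rightarrow> complex \<Rightarrow> complex) \<Rightarrow> nat \<Rightarrow> complex \<Rightarrow> complex \<Rightarrow>
    (nat \<Rightarrow> complex) \<Rightarrow> nat \<Rightarrow> complex" where
  "gamma_act \<sigma> s a b z = (\<lambda>j. if j \<le> s then \<sigma> j a * z j + \<sigma> j b else 0)"

text \<open>The covering map pi: a point of M_K is a Gamma-orbit.\<close>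
definition OT_pi :: "complex set \<Rightarrow> (nat \<Rightarrow> complex \<Rightarrow> complex) \<Rightarrow> nat \<Rightarrow> complex set \<Rightarrow>
    (nat \<Rightarrow> complex) \<Rightarrow> (nat \<Rightarrow> complex) set" where
  "OT_pi K \<sigma> s G z = {gamma_act \<sigma> s a b z | a b. a \<in> G \<and> b \<in> ring_of_integers K}"

definition OT_topology :: "complex set \<Rightarrow> (nat \<Rightarrow> complex \<Rightarrow> complex) \<Rightarrow> nat \<Rightarrow> complex set \<Rightarrow>
    (nat \<Rightarrow> complex) set topology" where
  "OT_topology K \<sigma> s G = topology (\<lambda>U. U \<subseteq> OT_pi K \<sigma> s G ` OT_domain s \<and>
      openin (top_of_set (OT_domain s)) {z \<in> OT_domain s. OT_pi K \<sigma> s G z \<in> U})"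

definition log_Im :: "nat \<Rightarrow> (nat \<Rightarrow> complex) \<Rightarrow> nat \<Rightarrow> real" where
  "log_Im s z = (\<lambda>j. if j < s then ln (Im (z j)) else 0)"

text \<open>The fiber p^{-1}(p(pi t)), p induced by z \<mapsto> (log y_1,...,log y_{m-1}) mod Lambda.\<close>
definition OT_fiber :: "complex set \<Rightarrow> (nat \<Rightarrow> complex \<Rightarrow> complex) \<Rightarrow> nat \<Rightarrow> complex set \<Rightarrow>
    (nat \<Rightarrow> complex) \<Rightarrow> (nat \<Rightarrow> complex) set set" where
  "OT_fiber K \<sigma> s G t = OT_pi K \<sigma> s G `
     {z \<in> OT_domain s. log_Im s z - log_Im s t \<in> Lambda \<sigma> s G}"

definition OT_leaf :: "complex set \<Rightarrow> (nat \<Rightarrow> complex \<Rightarrow> complex) \<Rightarrow> nat \<Rightarrow> complex set \<Rightarrow>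
    (nat \<Rightarrow> complex) \<Rightarrow> (nat \<Rightarrow> complex) set set" where
  "OT_leaf K \<sigma> s G t = OT_pi K \<sigma> s G ` {z \<in> OT_domain s. \<forall>j<s. z j = t j}"

end

theory Submission
  imports Defs "Jordan_Normal_Form.Char_Poly"
begin

text \<open>
  A point of the fiber through \<open>\<pi> t\<close> is the orbit of some \<open>z\<close> whose imaginary parts in the
  real directions are those of \<open>t\<close> scaled by \<open>\<sigma>\<^sub>j(a)\<close> for some \<open>a \<in> G\<close>. Acting by
  \<open>(a, b)\<close> on a suitable point of the leaf through \<open>t\<close> reproduces these imaginary parts, shifts
  the real parts by \<open>\<sigma>\<^sub>j(b)\<close>, and hits \<open>z\<^sub>m\<close> exactly, because the complex coordinate of the
  leaf is free. So density of the leaf reduces to density of \<open>{(\<sigma>\<^sub>1 b, \<dots>, \<sigma>\<^sub>s b) | b \<in> O\<^sub>K}\<close>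
  in \<open>\<real>\<^sup>s\<close>. Since \<open>\<Lambda>\<close> is a full lattice there is \<open>u \<in> G\<close> whose real embeddings are pairwise
  distinct and lie in \<open>(0, 1)\<close>; by Lagrange interpolation every target is a real combination
  \<open>\<Sum>\<^sub>k c\<^sub>k \<sigma>\<^sub>j(u)\<^bsup>N+k\<^esup>\<close> with \<open>k \<le> s - 1\<close>, and rounding the \<open>c\<^sub>k\<close> to integers costs at most
  \<open>s \<cdot> max\<^sub>j \<sigma>\<^sub>j(u)\<^sup>N\<close>, which tends to \<open>0\<close>.
\<close>

section \<open>Algebraic integers form a ring\<close>

text \<open>If \<open>x\<close> preserves the \<open>\<int>\<close>-span of a nonzero finite family, it is an eigenvalue of an integer
  matrix; sums and products of algebraic integers preserve the span of the products of their powers.\<close>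

definition acts_integrally :: "('i \<Rightarrow> complex) \<Rightarrow> 'i set \<Rightarrow> complex \<Rightarrow> bool" where
  "acts_integrally v I x \<longleftrightarrow>
     (\<exists>c :: 'i \<Rightarrow> 'i \<Rightarrow> int. \<forall>k\<in>I. x * v k = (\<Sum>l\<in>I. of_int (c k l) * v l))"

lemma acts_integrally_add:
  assumes "acts_integrally v I x" "acts_integrally v I y"
  shows "acts_integrally v I (x + y)"
proof -
  obtain c d where
    "\<forall>k\<in>I. x * v k = (\<Sum>l\<in>I. of_int (c k l) * v l)"
    "\<forall>k\<in>I. y * v k = (\<Sum>l\<in>I. of_int (d k l) * v l)"
    using assms unfolding acts_integrally_def by blast
  then have "\<forall>k\<in>I. (x + y) * v k = (\<Sum>l\<in>I. of_int (c k l + d k l) * v l)"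
    by (simp add: distrib_right sum.distrib)
  then show ?thesis
    unfolding acts_integrally_def by (intro exI[of _ "\<lambda>k l. c k l + d k l"])
qed

lemma acts_integrally_mult:
  assumes "finite I" "acts_integrally v I x" "acts_integrally v I y"
  shows "acts_integrally v I (x * y)"
proof -
  obtain c d where
    c: "\<forall>k\<in>I. x * v k = (\<Sum>l\<in>I. of_int (c k l) * v l)" and
    d: "\<forall>k\<in>I. y * v k = (\<Sum>l\<in>I. of_int (d k l) * v l)"
    using assms unfolding acts_integrally_def by blast
  have "x * y * v k = (\<Sum>m\<in>I. of_int (\<Sum>l\<in>I. d k l * c l m) * v m)" if "k \<in> I" for k
  proof -
    have "x * y * v k = (\<Sum>l\<in>I. of_int (d k l) * (x * v l))"
      using d that by (simp add: sum_distrib_left algebra_simps)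
    also have "\<dots> = (\<Sum>l\<in>I. \<Sum>m\<in>I. of_int (d k l * c l m) * v m)"
      using c by (simp add: sum_distrib_left mult.assoc)
    also have "\<dots> = (\<Sum>m\<in>I. of_int (\<Sum>l\<in>I. d k l * c l m) * v m)"
      by (subst sum.swap) (simp add: sum_distrib_right)
    finally show ?thesis .
  qed
  then show ?thesis
    unfolding acts_integrally_def by (intro exI[of _ "\<lambda>k m. \<Sum>l\<in>I. d k l * c l m"]) blast
qed

lemma acts_integrally_reindex:
  assumes "bij_betw h J I" "acts_integrally v I x"
  shows "acts_integrally (v \<circ> h) J x"
proof -
  obtain c where c: "\<forall>k\<in>I. x * v k = (\<Sum>l\<in>I. of_int (c k l) * v l)"
    using assms(2) unfolding acts_integrally_def by blast
  have "x * v (h k) = (\<Sum>l\<in>J. of_int (c (h k) (h l)) * v (h l))" if "k \<in> J" for k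
  proof -
    have "x * v (h k) = (\<Sum>l\<in>I. of_int (c (h k) l) * v l)"
      using c bij_betwE[OF assms(1)] that by blast
    also have "\<dots> = (\<Sum>l\<in>J. of_int (c (h k) (h l)) * v (h l))"
      by (rule sum.reindex_bij_betw[OF assms(1), symmetric])
    finally show ?thesis .
  qed
  then show ?thesis
    unfolding acts_integrally_def by (intro exI[of _ "\<lambda>k l. c (h k) (h l)"]) simp
qed

lemma acts_integrally_tensor:
  fixes f :: "'i \<Rightarrow> complex" and g :: "'j \<Rightarrow> complex"
  assumes "acts_integrally f I x" "finite J"
  shows "acts_integrally (\<lambda>(i, j). f i * g j) (I \<times> J) x"
proof -
  obtain c where c: "\<forall>k\<in>I. x * f k = (\<Sum>l\<in>I. of_int (c k l) * f l)"
    using assms(1) unfolding acts_integrally_def by blast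
  define e :: "'i \<times> 'j \<Rightarrow> 'i \<times> 'j \<Rightarrow> int"
    where "e = (\<lambda>(i, j) (l, m). if m = j then c i l else 0)"
  have "x * (f i * g j) = (\<Sum>(l, m)\<in>I \<times> J. of_int (e (i, j) (l, m)) * (f l * g m))"
    if "i \<in> I" "j \<in> J" for i j
  proof -
    have "(\<Sum>m\<in>J. of_int (e (i, j) (l, m)) * (f l * g m))
        = (\<Sum>m\<in>J. if m = j then of_int (c i l) * f l * g j else 0)" for l
      by (rule sum.cong) (auto simp: e_def)
    then have "(\<Sum>l\<in>I. \<Sum>m\<in>J. of_int (e (i, j) (l, m)) * (f l * g m))
        = (\<Sum>l\<in>I. of_int (c i l) * f l) * g j"
      using that assms(2) by (simp add: sum_distrib_right)
    also have "\<dots> = x * (f i * g j)"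
      using c that by simp
    finally show ?thesis
      by (simp add: sum.cartesian_product)
  qed
  then show ?thesis
    unfolding acts_integrally_def by (intro exI[of _ e]) (auto simp: case_prod_unfold)
qed

lemma algebraic_int_acts_integrally_on_powers:
  assumes "algebraic_int \<alpha>"
  obtains d where "d > 0" "acts_integrally (\<lambda>i. \<alpha> ^ i) {..<d} \<alpha>"
proof -
  obtain P :: "int poly" where P: "poly (map_poly of_int P) \<alpha> = 0" "lead_coeff P = 1"
    using assms algebraic_int_altdef_ipoly by blast
  define d where "d = degree P"
  have "d > 0"
  proof (rule ccontr)
    assume "\<not> d > 0"
    then have "poly (map_poly of_int P) \<alpha> = (of_int (lead_coeff P) :: complex)"
      by (simp add: d_def poly_altdef degree_map_poly)
    then show False
      using P by simp
  qed
  have "0 = (\<Sum>i\<le>d. of_int (coeff P i) * \<alpha> ^ i)"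
    using P(1) by (simp add: poly_altdef degree_map_poly d_def)
  also have "\<dots> = (\<Sum>i<d. of_int (coeff P i) * \<alpha> ^ i) + \<alpha> ^ d"
    using P(2) by (simp add: lessThan_Suc_atMost[symmetric] d_def)
  finally have monic: "\<alpha> ^ d = (\<Sum>l<d. of_int (- coeff P l) * \<alpha> ^ l)"
    by (simp add: sum_negf eq_neg_iff_add_eq_0 add.commute)
  define c where "c = (\<lambda>i l. if i + 1 < d then of_bool (l = i + 1) else - coeff P l)"
  have "\<alpha> * \<alpha> ^ i = (\<Sum>l<d. of_int (c i l) * \<alpha> ^ l)" if "i < d" for i
  proof (cases "i + 1 < d")
    case True
    then have "(\<Sum>l<d. of_int (c i l) * \<alpha> ^ l) = (\<Sum>l<d. if l = i + 1 then \<alpha> ^ l else 0)"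
      by (intro sum.cong) (auto simp: c_def)
    then show ?thesis
      using True by simp
  next
    case False
    with that have "d = Suc i"
      by simp
    then have "\<alpha> * \<alpha> ^ i = \<alpha> ^ d"
      by simp
    then show ?thesis
      using False monic by (simp add: c_def)
  qed
  then show ?thesis
    using that \<open>d > 0\<close> unfolding acts_integrally_def by blast
qed

lemma algebraic_int_common_module:
  assumes "algebraic_int \<alpha>" "algebraic_int \<beta>"
  obtains I k and v :: "nat \<times> nat \<Rightarrow> complex" where "finite I" "k \<in> I" "v k \<noteq> 0"
    "acts_integrally v I \<alpha>" "acts_integrally v I \<beta>"
proof -
  obtain d e where de: "d > 0" "e > 0"
    and \<alpha>: "acts_integrally (\<lambda>i. \<alpha> ^ i) {..<d} \<alpha>"
    and \<beta>: "acts_integrally (\<lambda>j. \<beta> ^ j) {..<e} \<beta>"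
    using assms by (metis algebraic_int_acts_integrally_on_powers)
  define v where "v = (\<lambda>(i, j). \<alpha> ^ i * \<beta> ^ j)"
  have "acts_integrally v ({..<d} \<times> {..<e}) \<alpha>"
    unfolding v_def by (rule acts_integrally_tensor[OF \<alpha>]) simp
  moreover have "bij_betw prod.swap ({..<d} \<times> {..<e}) ({..<e} \<times> {..<d})"
    by (simp add: bij_betw_def product_swap)
  then have "acts_integrally ((\<lambda>(j, i). \<beta> ^ j * \<alpha> ^ i) \<circ> prod.swap) ({..<d} \<times> {..<e}) \<beta>"
    by (rule acts_integrally_reindex[OF _ acts_integrally_tensor[OF \<beta>]]) simp
  then have "acts_integrally v ({..<d} \<times> {..<e}) \<beta>"
    by (simp add: v_def comp_def case_prod_unfold mult.commute)
  ultimately show ?thesis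
    using de by (intro that[of _ "(0, 0)"]) (auto simp: v_def)
qed

lemma algebraic_int_eigenvalue:
  assumes "A \<in> carrier_mat n n" "eigenvalue (map_mat of_int A) (x :: complex)"
  shows "algebraic_int x"
proof (rule algebraic_int.intros)
  have A': "map_mat of_int A \<in> carrier_mat n n"
    using assms(1) by simp
  have cp: "char_poly (map_mat of_int A) = map_poly of_int (char_poly A)"
    by (rule of_int_hom.char_poly_hom[OF assms(1)])
  have "degree (char_poly A) = n \<and> coeff (char_poly A) n = 1"
    by (rule degree_monic_char_poly[OF assms(1)])
  then show "lead_coeff (char_poly (map_mat of_int A)) = (1 :: complex)"
    unfolding cp by (simp add: degree_map_poly coeff_map_poly)
  show "\<forall>i. coeff (char_poly (map_mat of_int A)) i \<in> \<int>"
    unfolding cp by (simp add: coeff_map_poly)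
  show "poly (char_poly (map_mat of_int A)) x = 0"
    using assms(2) unfolding eigenvalue_root_char_poly[OF A'] .
qed

lemma algebraic_int_if_acts_integrally:
  assumes "finite I" "k \<in> I" "v k \<noteq> 0" "acts_integrally v I x"
  shows "algebraic_int x"
proof -
  define n where "n = card I"
  obtain h where h: "bij_betw h {..<n} I"
    using ex_bij_betw_nat_finite[OF assms(1)] by (auto simp: n_def atLeast0LessThan)
  obtain c where c: "\<forall>i<n. x * v (h i) = (\<Sum>j<n. of_int (c i j) * v (h j))"
    using acts_integrally_reindex[OF h assms(4)] unfolding acts_integrally_def by auto
  define A where "A = Matrix.mat n n (\<lambda>(i, j). c i j)"
  define w where "w = Matrix.vec n (v \<circ> h)"
  have "map_mat of_int A *\<^sub>v w = x \<cdot>\<^sub>v w"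
    using c by (intro eq_vecI) (simp_all add: A_def w_def scalar_prod_def atLeast0LessThan mult.commute)
  moreover obtain i where "i < n" "h i = k"
    using h assms(2) by (metis bij_betw_iff_bijections lessThan_iff)
  then have "w \<noteq> 0\<^sub>v n"
    using assms(3) by (metis w_def comp_apply index_vec index_zero_vec(1))
  ultimately have "eigenvector (map_mat of_int A) w x"
    unfolding eigenvector_def by (simp add: A_def w_def)
  then have "eigenvalue (map_mat of_int A) x"
    unfolding eigenvalue_def by blast
  moreover have "A \<in> carrier_mat n n"
    by (simp add: A_def)
  ultimately show ?thesis
    using algebraic_int_eigenvalue by blast
qed

lemma algebraic_int_plus:
  fixes \<alpha> \<beta> :: complex
  assumes "algebraic_int \<alpha>" "algebraic_int \<beta>"
  shows "algebraic_int (\<alpha> + \<beta>)"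
proof -
  obtain I k and v :: "nat \<times> nat \<Rightarrow> complex" where I: "finite I" "k \<in> I" "v k \<noteq> 0"
    "acts_integrally v I \<alpha>" "acts_integrally v I \<beta>"
    by (rule algebraic_int_common_module[OF assms])
  then have "acts_integrally v I (\<alpha> + \<beta>)"
    by (simp add: acts_integrally_add)
  then show ?thesis
    using I(1-3) by (intro algebraic_int_if_acts_integrally)
qed

lemma algebraic_int_times:
  fixes \<alpha> \<beta> :: complex
  assumes "algebraic_int \<alpha>" "algebraic_int \<beta>"
  shows "algebraic_int (\<alpha> * \<beta>)"
proof -
  obtain I k and v :: "nat \<times> nat \<Rightarrow> complex" where I: "finite I" "k \<in> I" "v k \<noteq> 0"
    "acts_integrally v I \<alpha>" "acts_integrally v I \<beta>"
    by (rule algebraic_int_common_module[OF assms])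
  then have "acts_integrally v I (\<alpha> * \<beta>)"
    by (simp add: acts_integrally_mult)
  then show ?thesis
    using I(1-3) by (intro algebraic_int_if_acts_integrally)
qed

section \<open>Subfields of \<open>\<complex>\<close> and their embeddings\<close>

lemma subfield_C_0: "subfield_C K \<Longrightarrow> 0 \<in> K"
  and subfield_C_1: "subfield_C K \<Longrightarrow> 1 \<in> K"
  and subfield_C_add: "subfield_C K \<Longrightarrow> x \<in> K \<Longrightarrow> y \<in> K \<Longrightarrow> x + y \<in> K"
  and subfield_C_diff: "subfield_C K \<Longrightarrow> x \<in> K \<Longrightarrow> y \<in> K \<Longrightarrow> x - y \<in> K"
  and subfield_C_mult: "subfield_C K \<Longrightarrow> x \<in> K \<Longrightarrow> y \<in> K \<Longrightarrow> x * y \<in> K"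
  by (simp_all add: subfield_C_def)

lemma subfield_C_of_int:
  assumes "subfield_C K"
  shows "of_int n \<in> K"
proof -
  have nat: "of_nat m \<in> K" for m
    by (induction m) (simp_all add: assms subfield_C_0 subfield_C_1 subfield_C_add)
  show ?thesis
  proof (cases n)
    case (nonneg m)
    then show ?thesis using nat by simp
  next
    case (neg m)
    then have "of_int n = 0 - (of_nat (Suc m) :: complex)"
      by simp
    then show ?thesis
      using subfield_C_diff[OF assms subfield_C_0[OF assms] nat[of "Suc m"]] by (simp only:)
  qed
qed

lemma subfield_C_sum: "subfield_C K \<Longrightarrow> (\<And>i. i \<in> A \<Longrightarrow> f i \<in> K) \<Longrightarrow> sum f A \<in> K"
  by (induction A rule: infinite_finite_induct) (simp_all add: subfield_C_0 subfield_C_add)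

lemma subfield_C_power: "subfield_C K \<Longrightarrow> x \<in> K \<Longrightarrow> x ^ n \<in> K"
  by (induction n) (simp_all add: subfield_C_1 subfield_C_mult)

lemma ring_of_integers_subset: "ring_of_integers K \<subseteq> K"
  by (auto simp: ring_of_integers_def)

lemma ring_of_integers_iff: "x \<in> ring_of_integers K \<longleftrightarrow> x \<in> K \<and> algebraic_int x"
  by (auto simp: ring_of_integers_def algebraic_integer_def algebraic_int.simps)

lemma ring_of_integers_of_int: "subfield_C K \<Longrightarrow> of_int n \<in> ring_of_integers K"
  by (simp add: ring_of_integers_iff subfield_C_of_int)

lemma ring_of_integers_add:
  "subfield_C K \<Longrightarrow> x \<in> ring_of_integers K \<Longrightarrow> y \<in> ring_of_integers K \<Longrightarrow> x + y \<in> ring_of_integers K"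
  by (simp add: ring_of_integers_iff subfield_C_add algebraic_int_plus)

lemma ring_of_integers_mult:
  "subfield_C K \<Longrightarrow> x \<in> ring_of_integers K \<Longrightarrow> y \<in> ring_of_integers K \<Longrightarrow> x * y \<in> ring_of_integers K"
  by (simp add: ring_of_integers_iff subfield_C_mult algebraic_int_times)

lemma ring_of_integers_uminus:
  "subfield_C K \<Longrightarrow> x \<in> ring_of_integers K \<Longrightarrow> - x \<in> ring_of_integers K"
  using subfield_C_diff[OF _ subfield_C_0] by (fastforce simp: ring_of_integers_iff)

lemma ring_of_integers_sum:
  "subfield_C K \<Longrightarrow> (\<And>i. i \<in> A \<Longrightarrow> f i \<in> ring_of_integers K) \<Longrightarrow> sum f A \<in> ring_of_integers K"
  by (induction A rule: infinite_finite_induct)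
    (simp_all add: ring_of_integers_add ring_of_integers_of_int[where n = 0, simplified])

lemma ring_of_integers_power:
  "subfield_C K \<Longrightarrow> x \<in> ring_of_integers K \<Longrightarrow> x ^ n \<in> ring_of_integers K"
  by (induction n) (simp_all add: ring_of_integers_mult ring_of_integers_of_int[where n = 1, simplified])

context
  fixes K and f :: "complex \<Rightarrow> complex"
  assumes K: "subfield_C K" and f: "field_embedding K f"
begin

lemma field_embedding_1: "f 1 = 1"
  and field_embedding_add: "x \<in> K \<Longrightarrow> y \<in> K \<Longrightarrow> f (x + y) = f x + f y"
  and field_embedding_mult: "x \<in> K \<Longrightarrow> y \<in> K \<Longrightarrow> f (x * y) = f x * f y"
  using f by (simp_all add: field_embedding_def)

lemma field_embedding_0: "f 0 = 0"
  using field_embedding_add[OF subfield_C_0[OF K] subfield_C_0[OF K]] by simp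

lemma field_embedding_diff:
  assumes "x \<in> K" "y \<in> K"
  shows "f (x - y) = f x - f y"
  using field_embedding_add[OF subfield_C_diff[OF K assms] assms(2)] by simp

lemma field_embedding_uminus: "x \<in> K \<Longrightarrow> f (- x) = - f x"
  using field_embedding_diff[OF subfield_C_0[OF K]] by (simp add: field_embedding_0)

lemma field_embedding_of_int: "f (of_int n) = of_int n"
proof -
  have nat: "f (of_nat m) = of_nat m" for m
  proof (induction m)
    case (Suc m)
    then show ?case
      using field_embedding_add[OF subfield_C_1[OF K] subfield_C_of_int[OF K, of "int m"]]
      by (simp add: field_embedding_1)
  qed (simp add: field_embedding_0)
  show ?thesis
  proof (cases n)
    case (nonneg m)
    then show ?thesis
      using nat by simp
  next
    case (neg m)
    have "of_nat (Suc m) \<in> K"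
      using subfield_C_of_int[OF K, of "int (Suc m)"] by simp
    then have "f (- of_nat (Suc m)) = - of_nat (Suc m)"
      using field_embedding_uminus nat[of "Suc m"] by (simp only:)
    with neg show ?thesis
      by simp
  qed
qed

lemma field_embedding_sum: "(\<And>i. i \<in> A \<Longrightarrow> g i \<in> K) \<Longrightarrow> f (sum g A) = (\<Sum>i\<in>A. f (g i))"
  by (induction A rule: infinite_finite_induct)
    (simp_all add: field_embedding_0 field_embedding_add subfield_C_sum[OF K])

lemma field_embedding_power: "x \<in> K \<Longrightarrow> f (x ^ n) = f x ^ n"
  by (induction n) (simp_all add: field_embedding_1 field_embedding_mult subfield_C_power[OF K])

lemma field_embedding_inverse:
  assumes "x \<in> K" "inverse x \<in> K" "x \<noteq> 0"
  shows "f (inverse x) = inverse (f x)"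
proof -
  have "f x * f (inverse x) = 1"
    using field_embedding_mult[OF assms(1,2)] assms(3) by (simp add: field_embedding_1)
  then show ?thesis
    by (rule inverse_unique[symmetric])
qed

end

section \<open>Approximation lemmas\<close>

lemma open_fun_contains_box:
  fixes U :: "('i \<Rightarrow> 'a::metric_space) set"
  assumes "open U" "z \<in> U" "finite S"
  obtains \<delta> where "\<delta> > 0"
    "\<And>y. (\<And>j. j \<in> S \<Longrightarrow> dist (y j) (z j) < \<delta>) \<Longrightarrow> (\<And>j. j \<notin> S \<Longrightarrow> y j = z j) \<Longrightarrow> y \<in> U"
proof -
  have "openin (product_topology (\<lambda>i. euclidean) UNIV) U"
    using assms(1) by (simp add: open_fun_def)
  then obtain X where X: "z \<in> (\<Pi>\<^sub>E i\<in>UNIV. X i)" "\<And>i. openin euclidean (X i)"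
      "(\<Pi>\<^sub>E i\<in>UNIV. X i) \<subseteq> U"
    using product_topology_open_contains_basis[OF _ assms(2)] by blast
  have "\<exists>e>0. ball (z i) e \<subseteq> X i" for i
  proof -
    have "z i \<in> X i" "open (X i)"
      using X(1,2) by auto
    then show ?thesis
      using open_contains_ball by blast
  qed
  then obtain e where e: "\<And>i. e i > 0" "\<And>i. ball (z i) (e i) \<subseteq> X i"
    by metis
  define \<delta> where "\<delta> = Min (insert 1 (e ` S))"
  show ?thesis
  proof (rule that)
    show "\<delta> > 0"
      using e(1) assms(3) by (simp add: \<delta>_def)
    fix y assume y: "\<And>j. j \<in> S \<Longrightarrow> dist (y j) (z j) < \<delta>" "\<And>j. j \<notin> S \<Longrightarrow> y j = z j"
    have "y i \<in> X i" for i
    proof (cases "i \<in> S")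
      case True
      then have "\<delta> \<le> e i"
        using assms(3) by (simp add: \<delta>_def)
      then show ?thesis
        using y(1)[OF True] e(2)[of i] by (auto simp: dist_commute)
    next
      case False
      then show ?thesis
        using y(2) X(1) by auto
    qed
    then show "y \<in> U"
      using X(3) by blast
  qed
qed

lemma linear_system_solvable:
  fixes v :: "nat \<Rightarrow> nat \<Rightarrow> real"
  assumes indep: "\<forall>c :: nat \<Rightarrow> real. (\<forall>j<n. (\<Sum>i<n. c i * v i j) = 0) \<longrightarrow> (\<forall>i<n. c i = 0)"
  obtains c where "\<And>j. j < n \<Longrightarrow> (\<Sum>i<n. c i * v i j) = y j"
proof -
  define A :: "real mat" where "A = Matrix.mat n n (\<lambda>(j, i). v i j)"
  have A: "A \<in> carrier_mat n n"
    by (simp add: A_def)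
  have mult_vec: "(A *\<^sub>v w) $ j = (\<Sum>i<n. w $ i * v i j)" if "j < n" "w \<in> carrier_vec n" for w j
    using that by (simp add: A_def scalar_prod_def atLeast0LessThan mult.commute)
  have "det A \<noteq> 0"
  proof
    assume "det A = 0"
    then obtain w where w: "w \<in> carrier_vec n" "w \<noteq> 0\<^sub>v n" "A *\<^sub>v w = 0\<^sub>v n"
      using det_0_iff_vec_prod_zero[OF A] by blast
    then have "\<forall>j<n. (\<Sum>i<n. w $ i * v i j) = 0"
      using mult_vec by (metis index_zero_vec(1))
    then have "\<forall>i<n. w $ i = 0"
      using indep by blast
    then show False
      using w(1,2) by (metis carrier_vecD eq_vecI index_zero_vec)
  qed
  then obtain B where B: "B \<in> carrier_mat n n" "A * B = 1\<^sub>m n"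
    using det_non_zero_imp_unit[OF A] unfolding Units_def ring_mat_def by auto
  define w where "w = B *\<^sub>v Matrix.vec n y"
  have "A *\<^sub>v w = Matrix.vec n y"
    using assoc_mult_mat_vec[OF A B(1), of "Matrix.vec n y"] B(2) by (simp add: w_def)
  then have "\<forall>j<n. (\<Sum>i<n. w $ i * v i j) = y j"
    using mult_vec B(1) by (metis index_vec mult_mat_vec_carrier vec_carrier w_def)
  then show ?thesis
    using that by blast
qed

lemma full_lattice_bounded_distance:
  assumes "full_lattice d L"
  obtains R where "R > 0" "\<And>y. \<exists>w\<in>L. \<forall>j<d. \<bar>w j - y j\<bar> < R"
proof -
  obtain v where indep: "\<forall>c :: nat \<Rightarrow> real. (\<forall>j<d. (\<Sum>i<d. c i * v i j) = 0) \<longrightarrow> (\<forall>i<d. c i = 0)"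
    and L: "L = {(\<lambda>j. \<Sum>i<d. of_int (k i) * v i j) | k :: nat \<Rightarrow> int. True}"
    using assms unfolding full_lattice_def by blast
  define R where "R = 1 + (\<Sum>i<d. \<Sum>j<d. \<bar>v i j\<bar>)"
  show ?thesis
  proof (rule that)
    show "R > 0"
      by (simp add: R_def add_pos_nonneg sum_nonneg)
    fix y
    obtain c where c: "\<And>j. j < d \<Longrightarrow> (\<Sum>i<d. c i * v i j) = y j"
      using linear_system_solvable[OF indep] by blast
    define w where "w = (\<lambda>j. \<Sum>i<d. of_int \<lfloor>c i\<rfloor> * v i j)"
    have "\<bar>w j - y j\<bar> < R" if j: "j < d" for j
    proof -
      have "\<bar>w j - y j\<bar> = \<bar>\<Sum>i<d. (of_int \<lfloor>c i\<rfloor> - c i) * v i j\<bar>"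
        using c[OF j] by (simp add: w_def sum_subtractf left_diff_distrib)
      also have "\<dots> \<le> (\<Sum>i<d. \<bar>(of_int \<lfloor>c i\<rfloor> - c i) * v i j\<bar>)"
        by (rule sum_abs)
      also have "\<dots> \<le> (\<Sum>i<d. \<bar>v i j\<bar>)"
      proof (rule sum_mono)
        fix i
        have "\<bar>of_int \<lfloor>c i\<rfloor> - c i\<bar> \<le> 1"
          by linarith
        then show "\<bar>(of_int \<lfloor>c i\<rfloor> - c i) * v i j\<bar> \<le> \<bar>v i j\<bar>"
          by (simp add: abs_mult mult_left_le_one_le)
      qed
      also have "\<dots> \<le> (\<Sum>i<d. \<Sum>j<d. \<bar>v i j\<bar>)"
        using j by (intro sum_mono member_le_sum) auto
      finally show ?thesis
        unfolding R_def by linarith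
    qed
    moreover have "w \<in> L"
      unfolding L w_def by (intro CollectI exI[of _ "\<lambda>i. \<lfloor>c i\<rfloor>"]) simp
    ultimately show "\<exists>w\<in>L. \<forall>j<d. \<bar>w j - y j\<bar> < R"
      by blast
  qed
qed

lemma lagrange_interpolation:
  fixes x y :: "nat \<Rightarrow> real"
  assumes "inj_on x {..<n}"
  obtains p where "degree p \<le> n - 1" "\<And>j. j < n \<Longrightarrow> poly p (x j) = y j"
proof -
  define Q where "Q = (\<lambda>j. \<Prod>i\<in>{..<n} - {j}. [:- x i, 1:])"
  define den where "den = (\<lambda>j. \<Prod>i\<in>{..<n} - {j}. x j - x i)"
  have den: "den j \<noteq> 0" if "j < n" for j
    using assms that by (auto simp: den_def inj_on_def)
  have poly_Q: "poly (Q j) (x l) = (if l = j then den j else 0)" if "l < n" for j l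
  proof (cases "l = j")
    case False
    with that have "(\<Prod>i\<in>{..<n} - {j}. x l - x i) = 0"
      by (intro prod_zero bexI[of _ l]) auto
    with False show ?thesis
      by (simp add: Q_def poly_prod)
  qed (simp add: Q_def den_def poly_prod)
  have deg_Q: "degree (Q j) \<le> n - 1" if "j < n" for j
  proof -
    have "degree (Q j) \<le> (\<Sum>i\<in>{..<n} - {j}. degree [:- x i, 1:])"
      unfolding Q_def using degree_prod_sum_le[of "{..<n} - {j}" "\<lambda>i. [:- x i, 1:]"] by (simp add: comp_def)
    also have "\<dots> = n - 1"
      using that by simp
    finally show ?thesis .
  qed
  define p where "p = (\<Sum>j<n. Polynomial.smult (y j / den j) (Q j))"
  show ?thesis
  proof (rule that)
    show "degree p \<le> n - 1"
      unfolding p_def by (intro degree_sum_le order.trans[OF degree_smult_le] deg_Q) auto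
    fix l assume l: "l < n"
    have "poly p (x l) = (\<Sum>j<n. if j = l then y l else 0)"
      unfolding p_def poly_sum poly_smult using l den by (intro sum.cong) (auto simp: poly_Q)
    then show "poly p (x l) = y l"
      using l by simp
  qed
qed

lemma poly_altdef_le_degree:
  fixes p :: "'a::comm_semiring_1 poly"
  assumes "degree p \<le> D"
  shows "poly p x = (\<Sum>k\<le>D. coeff p k * x ^ k)"
proof -
  have "poly p x = (\<Sum>k\<le>degree p. coeff p k * x ^ k)"
    by (rule poly_altdef)
  also have "\<dots> = (\<Sum>k\<le>D. coeff p k * x ^ k)"
    using assms by (intro sum.mono_neutral_left) (auto simp: coeff_eq_0)
  finally show ?thesis .
qed

lemma integer_combination_of_powers_approx:
  fixes x r :: "nat \<Rightarrow> real"
  assumes inj: "inj_on x {..<s}" and x: "\<And>j. j < s \<Longrightarrow> 0 < x j \<and> x j < 1" and "\<delta> > 0"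
  obtains N D and n :: "nat \<Rightarrow> int"
  where "\<And>l. l < s \<Longrightarrow> \<bar>(\<Sum>k\<le>D. of_int (n k) * x l ^ (N + k)) - r l\<bar> < \<delta>"
proof -
  define D where "D = s - 1"
  have "\<forall>\<^sub>F N in sequentially. x j ^ N * (real D + 1) < \<delta>" if "j < s" for j
  proof -
    have "(\<lambda>N. x j ^ N * (real D + 1)) \<longlonglongrightarrow> 0 * (real D + 1)"
      using x[OF that] by (intro tendsto_mult LIMSEQ_power_zero tendsto_const) simp
    then show ?thesis
      using \<open>\<delta> > 0\<close> by (intro order_tendstoD(2)) simp_all
  qed
  then have "\<forall>\<^sub>F N in sequentially. \<forall>j\<in>{..<s}. x j ^ N * (real D + 1) < \<delta>"
    by (intro eventually_ball_finite) auto
  then obtain N where N: "\<And>j. j < s \<Longrightarrow> x j ^ N * (real D + 1) < \<delta>"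
    unfolding eventually_sequentially by blast
  obtain p where p: "degree p \<le> D" "\<And>j. j < s \<Longrightarrow> poly p (x j) = r j / x j ^ N"
    using lagrange_interpolation[OF inj, of "\<lambda>j. r j / x j ^ N"] unfolding D_def by blast
  define n where "n = (\<lambda>k. \<lfloor>coeff p k\<rfloor>)"
  show ?thesis
  proof (rule that)
    fix l assume l: "l < s"
    have "r l = x l ^ N * (\<Sum>k\<le>D. coeff p k * x l ^ k)"
      using p x[OF l] l by (simp flip: poly_altdef_le_degree)
    then have "(\<Sum>k\<le>D. of_int (n k) * x l ^ (N + k)) - r l
        = x l ^ N * (\<Sum>k\<le>D. (of_int (n k) - coeff p k) * x l ^ k)"
      by (simp add: power_add sum_distrib_left sum_subtractf algebra_simps)
    then have "\<bar>(\<Sum>k\<le>D. of_int (n k) * x l ^ (N + k)) - r l\<bar>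
        = x l ^ N * \<bar>\<Sum>k\<le>D. (of_int (n k) - coeff p k) * x l ^ k\<bar>"
      using x[OF l] by (simp add: abs_mult)
    also have "\<dots> \<le> x l ^ N * (\<Sum>k\<le>D. 1)"
    proof (intro mult_left_mono order.trans[OF sum_abs] sum_mono)
      fix k
      have "\<bar>of_int (n k) - coeff p k\<bar> \<le> 1"
        unfolding n_def by linarith
      moreover have "\<bar>x l ^ k\<bar> \<le> 1"
        using x[OF l] by (simp add: power_le_one)
      ultimately show "\<bar>(of_int (n k) - coeff p k) * x l ^ k\<bar> \<le> 1"
        by (simp add: abs_mult mult_le_one)
    qed (use x[OF l] in simp)
    also have "\<dots> < \<delta>"
      using N[OF l] by (simp add: add.commute)
    finally show "\<bar>(\<Sum>k\<le>D. of_int (n k) * x l ^ (N + k)) - r l\<bar> < \<delta>" .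
  qed
qed

section \<open>The quotient topology of \<open>M\<^sub>K\<close>\<close>

definition quotient_topology :: "'a topology \<Rightarrow> ('a \<Rightarrow> 'b) \<Rightarrow> 'b topology" where
  "quotient_topology X f =
     topology (\<lambda>U. U \<subseteq> f ` topspace X \<and> openin X {x \<in> topspace X. f x \<in> U})"

lemma istopology_quotient:
  fixes X :: "'a topology" and f :: "'a \<Rightarrow> 'b"
  shows "istopology (\<lambda>U. U \<subseteq> f ` topspace X \<and> openin X {x \<in> topspace X. f x \<in> U})"
  unfolding istopology_def
proof (rule conjI; intro allI impI)
  fix S T :: "'b set"
  assume "S \<subseteq> f ` topspace X \<and> openin X {x \<in> topspace X. f x \<in> S}"
    and "T \<subseteq> f ` topspace X \<and> openin X {x \<in> topspace X. f x \<in> T}"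
  moreover have "{x \<in> topspace X. f x \<in> S \<inter> T} = {x \<in> topspace X. f x \<in> S} \<inter> {x \<in> topspace X. f x \<in> T}"
    by auto
  ultimately show "S \<inter> T \<subseteq> f ` topspace X \<and> openin X {x \<in> topspace X. f x \<in> S \<inter> T}"
    by (auto intro: openin_Int)
next
  fix \<U> :: "'b set set"
  assume "\<forall>U\<in>\<U>. U \<subseteq> f ` topspace X \<and> openin X {x \<in> topspace X. f x \<in> U}"
  moreover have "{x \<in> topspace X. f x \<in> \<Union>\<U>} = (\<Union>U\<in>\<U>. {x \<in> topspace X. f x \<in> U})"
    by auto
  ultimately show "\<Union>\<U> \<subseteq> f ` topspace X \<and> openin X {x \<in> topspace X. f x \<in> \<Union>\<U>}"
    by (auto intro: openin_Union)
qed

lemma openin_quotient_topology: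
  "openin (quotient_topology X f) U \<longleftrightarrow> U \<subseteq> f ` topspace X \<and> openin X {x \<in> topspace X. f x \<in> U}"
  unfolding quotient_topology_def topology_inverse'[OF istopology_quotient] ..

lemma topspace_quotient_topology: "topspace (quotient_topology X f) = f ` topspace X"
proof (rule subset_antisym)
  show "topspace (quotient_topology X f) \<subseteq> f ` topspace X"
    using openin_topspace[of "quotient_topology X f"] unfolding openin_quotient_topology by blast
  have "{x \<in> topspace X. f x \<in> f ` topspace X} = topspace X"
    by auto
  then have "openin (quotient_topology X f) (f ` topspace X)"
    by (simp add: openin_quotient_topology)
  then show "f ` topspace X \<subseteq> topspace (quotient_topology X f)"
    by (rule openin_subset)
qed

lemma closure_of_quotient_topologyI:
  assumes "x \<in> topspace X" "\<And>V. openin X V \<Longrightarrow> x \<in> V \<Longrightarrow> \<exists>y\<in>V. f y \<in> T"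
  shows "f x \<in> quotient_topology X f closure_of T"
  unfolding closure_of_def
proof (intro CollectI conjI allI impI)
  show "f x \<in> topspace (quotient_topology X f)"
    using assms(1) by (simp add: topspace_quotient_topology)
  fix U assume U: "f x \<in> U \<and> openin (quotient_topology X f) U"
  then have "openin X {x \<in> topspace X. f x \<in> U}"
    by (simp add: openin_quotient_topology)
  then obtain y where "y \<in> {x \<in> topspace X. f x \<in> U}" "f y \<in> T"
    using assms U by blast
  then show "\<exists>y\<in>T. y \<in> U"
    by blast
qed

lemma OT_topology_eq: "OT_topology K \<sigma> s G = quotient_topology (top_of_set (OT_domain s)) (OT_pi K \<sigma> s G)"
  by (simp add: OT_topology_def quotient_topology_def)

section \<open>Leaves are dense in the fibers\<close>

lemma gamma_act_cong: "(\<And>j. j \<le> s \<Longrightarrow> w j = w' j) \<Longrightarrow> gamma_act \<sigma> s a b w = gamma_act \<sigma> s a b w'"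
  by (simp add: gamma_act_def fun_eq_iff)

lemma OT_pi_cong:
  assumes "\<And>j. j \<le> s \<Longrightarrow> w j = w' j"
  shows "OT_pi K \<sigma> s G w = OT_pi K \<sigma> s G w'"
  unfolding OT_pi_def using gamma_act_cong[OF assms] by simp

locale OT_manifold =
  fixes K :: "complex set" and \<sigma> :: "nat \<Rightarrow> complex \<Rightarrow> complex" and s :: nat and G :: "complex set"
  assumes field: "OT_field K \<sigma> s" and admissible: "admissible K \<sigma> s G"
begin

abbreviation \<pi> where "\<pi> \<equiv> OT_pi K \<sigma> s G"

lemma subfield: "subfield_C K"
  using field by (simp add: OT_field_def)

lemma embedding: "j \<le> s \<Longrightarrow> field_embedding K (\<sigma> j)"
  using field by (simp add: OT_field_def)

lemma real_embedding: "j < s \<Longrightarrow> x \<in> K \<Longrightarrow> \<sigma> j x = of_real (Re (\<sigma> j x))"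
  using field by (auto simp: OT_field_def complex_is_Real_iff)

lemma G_subset: "a \<in> G \<Longrightarrow> a \<in> ring_of_integers K"
  and G_one: "1 \<in> G"
  and G_mult: "a \<in> G \<Longrightarrow> a' \<in> G \<Longrightarrow> a * a' \<in> G"
  and G_inverse: "a \<in> G \<Longrightarrow> inverse a \<in> G"
  and G_nonzero: "a \<in> G \<Longrightarrow> a \<noteq> 0"
  using admissible
  by (auto simp: admissible_def mult_subgroup_def pos_units_def units_of_OK_def)

lemma G_subset_K: "a \<in> G \<Longrightarrow> a \<in> K"
  using G_subset ring_of_integers_subset by blast

lemma G_real_embedding: "a \<in> G \<Longrightarrow> j < s \<Longrightarrow> \<sigma> j a = of_real (Re (\<sigma> j a)) \<and> Re (\<sigma> j a) > 0"
  using admissible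
  by (auto simp: admissible_def mult_subgroup_def pos_units_def complex_is_Real_iff)

lemma embedding_G_inverse: "a \<in> G \<Longrightarrow> j \<le> s \<Longrightarrow> \<sigma> j (inverse a) = inverse (\<sigma> j a)"
  by (intro field_embedding_inverse[OF subfield embedding] G_subset_K G_inverse G_nonzero)

lemma embedding_G_nonzero:
  assumes "a \<in> G" "j \<le> s"
  shows "\<sigma> j a \<noteq> 0"
proof -
  have "\<sigma> j a * \<sigma> j (inverse a) = \<sigma> j (a * inverse a)"
    using assms by (intro field_embedding_mult[OF subfield embedding, symmetric] G_subset_K G_inverse)
  also have "\<dots> = 1"
    using assms G_nonzero field_embedding_1[OF subfield embedding] by simp
  finally show ?thesis
    by auto
qed

lemma gamma_act_gamma_act:
  assumes "a \<in> G" "a' \<in> G" "b \<in> ring_of_integers K" "b' \<in> ring_of_integers K"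
  shows "gamma_act \<sigma> s a' b' (gamma_act \<sigma> s a b w) = gamma_act \<sigma> s (a' * a) (a' * b + b') w"
proof (rule ext)
  fix j
  show "gamma_act \<sigma> s a' b' (gamma_act \<sigma> s a b w) j = gamma_act \<sigma> s (a' * a) (a' * b + b') w j"
  proof (cases "j \<le> s")
    case True
    have K: "a \<in> K" "a' \<in> K" "b \<in> K" "b' \<in> K" "a' * b \<in> K"
      using assms G_subset_K ring_of_integers_subset subfield_C_mult[OF subfield] by blast+
    note hom = field_embedding_mult[OF subfield embedding[OF True]]
      field_embedding_add[OF subfield embedding[OF True]]
    have "\<sigma> j (a' * a) = \<sigma> j a' * \<sigma> j a" "\<sigma> j (a' * b + b') = \<sigma> j a' * \<sigma> j b + \<sigma> j b'"
      using hom K by simp_all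
    with True show ?thesis
      by (simp add: gamma_act_def algebra_simps)
  qed (simp add: gamma_act_def)
qed

lemma gamma_act_inverse:
  assumes "a \<in> G" "b \<in> ring_of_integers K" "j \<le> s"
  shows "gamma_act \<sigma> s (inverse a) (- (inverse a * b)) (gamma_act \<sigma> s a b w) j = w j"
proof -
  have K: "inverse a \<in> K" "b \<in> K" "inverse a * b \<in> K"
    using assms G_subset_K G_inverse ring_of_integers_subset subfield_C_mult[OF subfield] by blast+
  have "\<sigma> j (- (inverse a * b)) = - (\<sigma> j (inverse a) * \<sigma> j b)"
    using field_embedding_uminus[OF subfield embedding[OF assms(3)] K(3)]
      field_embedding_mult[OF subfield embedding[OF assms(3)] K(1,2)] by simp
  then show ?thesis
    using assms embedding_G_nonzero[OF assms(1,3)] embedding_G_inverse[OF assms(1,3)]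
    by (simp add: gamma_act_def field_simps)
qed

lemma OT_pi_gamma_act_subset:
  assumes "a \<in> G" "b \<in> ring_of_integers K"
  shows "\<pi> (gamma_act \<sigma> s a b w) \<subseteq> \<pi> w"
proof
  fix y assume "y \<in> \<pi> (gamma_act \<sigma> s a b w)"
  then obtain a' b' where a'b': "a' \<in> G" "b' \<in> ring_of_integers K"
    and "y = gamma_act \<sigma> s a' b' (gamma_act \<sigma> s a b w)"
    by (auto simp: OT_pi_def)
  then have "y = gamma_act \<sigma> s (a' * a) (a' * b + b') w"
    using assms by (simp add: gamma_act_gamma_act)
  moreover have "a' * a \<in> G"
    using assms a'b' by (intro G_mult)
  moreover have "a' * b + b' \<in> ring_of_integers K"
    using assms a'b' by (meson ring_of_integers_add ring_of_integers_mult subfield G_subset)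
  ultimately show "y \<in> \<pi> w"
    unfolding OT_pi_def by blast
qed

lemma OT_pi_gamma_act:
  assumes "a \<in> G" "b \<in> ring_of_integers K"
  shows "\<pi> (gamma_act \<sigma> s a b w) = \<pi> w"
proof
  have "- (inverse a * b) \<in> ring_of_integers K"
    using assms by (meson ring_of_integers_uminus ring_of_integers_mult subfield G_subset G_inverse)
  then have "\<pi> (gamma_act \<sigma> s (inverse a) (- (inverse a * b)) (gamma_act \<sigma> s a b w))
      \<subseteq> \<pi> (gamma_act \<sigma> s a b w)"
    using assms by (intro OT_pi_gamma_act_subset G_inverse)
  moreover have "\<pi> (gamma_act \<sigma> s (inverse a) (- (inverse a * b)) (gamma_act \<sigma> s a b w)) = \<pi> w"
    using assms by (intro OT_pi_cong gamma_act_inverse)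
  ultimately show "\<pi> w \<subseteq> \<pi> (gamma_act \<sigma> s a b w)"
    by simp
qed (rule OT_pi_gamma_act_subset[OF assms])

lemma exists_unit_embeddings_distinct_below_one:
  obtains u where "u \<in> G" "\<And>j. j < s \<Longrightarrow> Re (\<sigma> j u) < 1" "inj_on (\<lambda>j. Re (\<sigma> j u)) {..<s}"
proof -
  obtain R where R: "R > 0" "\<And>y. \<exists>w\<in>Lambda \<sigma> s G. \<forall>j<s. \<bar>w j - y j\<bar> < R"
    using admissible full_lattice_bounded_distance unfolding admissible_def by blast
  obtain w where w: "w \<in> Lambda \<sigma> s G" "\<And>j. j < s \<Longrightarrow> \<bar>w j + 2 * R * (real j + 1)\<bar> < R"
    using R(2)[of "\<lambda>j. - 2 * R * (real j + 1)"] by auto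
  then obtain u where u: "u \<in> G" "w = log_map \<sigma> s u"
    unfolding Lambda_def by blast
  have Re_u: "Re (\<sigma> j u) = exp (w j)" if "j < s" for j
    using G_real_embedding[OF u(1) that] that by (simp add: u(2) log_map_def)
  \<comment> \<open>the targets \<open>- 2 R (j + 1)\<close> are \<open>2 R\<close> apart, so \<open>w\<close> is negative and strictly decreasing\<close>
  have decreasing: "w j < w i" if "i < j" "j < s" for i j
  proof -
    have "0 \<le> 2 * R * (real j - real i - 1)"
      using that R(1) by (intro mult_nonneg_nonneg) auto
    then have "2 * R * (real i + 1) + 2 * R \<le> 2 * R * (real j + 1)"
      by (simp add: algebra_simps)
    then show ?thesis
      using w(2)[of i] w(2)[of j] that by (simp add: abs_less_iff)
  qed
  show ?thesis
  proof (rule that[OF u(1)])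
    fix j assume "j < s"
    moreover have "R \<le> 2 * R * (real j + 1)"
      using mult_nonneg_nonneg[of R "real j"] R(1) by (simp add: algebra_simps)
    ultimately have "w j < 0"
      using w(2)[of j] unfolding abs_less_iff by linarith
    then show "Re (\<sigma> j u) < 1"
      using Re_u \<open>j < s\<close> by simp
  next
    show "inj_on (\<lambda>j. Re (\<sigma> j u)) {..<s}"
    proof (rule inj_onI)
      fix i j assume "i \<in> {..<s}" "j \<in> {..<s}" "Re (\<sigma> i u) = Re (\<sigma> j u)"
      then have "w i = w j" "i < s" "j < s"
        using Re_u by auto
      then show "i = j"
        by (cases i j rule: linorder_cases) (auto dest: decreasing)
    qed
  qed
qed

lemma real_embeddings_dense:
  assumes "\<delta> > 0"
  shows "\<exists>b\<in>ring_of_integers K. \<forall>j<s. \<bar>Re (\<sigma> j b) - r j\<bar> < \<delta>"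
proof -
  obtain u where u: "u \<in> G" "\<And>j. j < s \<Longrightarrow> Re (\<sigma> j u) < 1" "inj_on (\<lambda>j. Re (\<sigma> j u)) {..<s}"
    using exists_unit_embeddings_distinct_below_one by blast
  have x: "0 < Re (\<sigma> j u) \<and> Re (\<sigma> j u) < 1" if "j < s" for j
    using u(2) G_real_embedding[OF u(1)] that by blast
  obtain N D and n :: "nat \<Rightarrow> int"
    where n: "\<And>l. l < s \<Longrightarrow> \<bar>(\<Sum>k\<le>D. of_int (n k) * Re (\<sigma> l u) ^ (N + k)) - r l\<bar> < \<delta>"
    using integer_combination_of_powers_approx[OF u(3) x assms] by blast
  define b where "b = (\<Sum>k\<le>D. of_int (n k) * u ^ (N + k))"
  have pow: "u ^ k \<in> ring_of_integers K" for k
    using ring_of_integers_power[OF subfield G_subset[OF u(1)]] .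
  have b: "b \<in> ring_of_integers K"
    unfolding b_def
  proof (rule ring_of_integers_sum[OF subfield])
    show "of_int (n k) * u ^ (N + k) \<in> ring_of_integers K" for k
      by (rule ring_of_integers_mult[OF subfield ring_of_integers_of_int[OF subfield] pow])
  qed
  have Re_b: "Re (\<sigma> l b) = (\<Sum>k\<le>D. of_int (n k) * Re (\<sigma> l u) ^ (N + k))" if l: "l < s" for l
  proof -
    have l_le: "l \<le> s"
      using l by simp
    have "u ^ k \<in> K" for k
      using subfield_C_power[OF subfield G_subset_K[OF u(1)]] .
    then have "\<sigma> l b = (\<Sum>k\<le>D. of_int (n k) * \<sigma> l u ^ (N + k))"
      unfolding b_def
      by (simp add: field_embedding_sum[OF subfield embedding[OF l_le]] subfield_C_mult[OF subfield]
          subfield_C_of_int[OF subfield] field_embedding_mult[OF subfield embedding[OF l_le]]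
          field_embedding_of_int[OF subfield embedding[OF l_le]]
          field_embedding_power[OF subfield embedding[OF l_le] G_subset_K[OF u(1)]])
    moreover obtain x where "\<sigma> l u = of_real x"
      using G_real_embedding[OF u(1) l] by blast
    ultimately show ?thesis
      by simp
  qed
  have "\<forall>j<s. \<bar>Re (\<sigma> j b) - r j\<bar> < \<delta>"
    using Re_b n by simp
  with b show ?thesis
    by blast
qed

lemma fiber_scaling:
  assumes "t \<in> OT_domain s" "z \<in> OT_domain s" "log_Im s z - log_Im s t \<in> Lambda \<sigma> s G"
  obtains a where "a \<in> G" "\<And>j. j < s \<Longrightarrow> Im (z j) = Re (\<sigma> j a) * Im (t j)"
proof -
  obtain a where a: "a \<in> G" "log_Im s z - log_Im s t = log_map \<sigma> s a"
    using assms(3) unfolding Lambda_def by auto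
  have "Im (z j) = Re (\<sigma> j a) * Im (t j)" if "j < s" for j
  proof -
    have "ln (Im (z j)) = ln (Re (\<sigma> j a)) + ln (Im (t j))"
      using fun_cong[OF a(2), of j] that by (simp add: log_Im_def log_map_def)
    moreover have "Im (z j) > 0" "Im (t j) > 0" "Re (\<sigma> j a) > 0"
      using assms(1,2) G_real_embedding[OF a(1) that] that by (auto simp: OT_domain_def)
    ultimately have "ln (Im (z j)) = ln (Re (\<sigma> j a) * Im (t j))"
      by (simp add: ln_mult)
    then show ?thesis
      using \<open>Im (z j) > 0\<close> \<open>Im (t j) > 0\<close> \<open>Re (\<sigma> j a) > 0\<close> by simp
  qed
  then show ?thesis
    using a(1) that by blast
qed

lemma leaf_approaches_fiber_point:
  assumes t: "t \<in> OT_domain s" and z: "z \<in> OT_domain s"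
    and a: "a \<in> G" "\<And>j. j < s \<Longrightarrow> Im (z j) = Re (\<sigma> j a) * Im (t j)"
    and "\<delta> > 0"
  obtains w y where "w \<in> OT_domain s" "\<And>j. j < s \<Longrightarrow> w j = t j" "y \<in> OT_domain s" "\<pi> y = \<pi> w"
    "\<And>j. j < s \<Longrightarrow> dist (y j) (z j) < \<delta>" "\<And>j. s \<le> j \<Longrightarrow> y j = z j"
proof -
  obtain b where b: "b \<in> ring_of_integers K"
    "\<And>j. j < s \<Longrightarrow> \<bar>Re (\<sigma> j b) - (Re (z j) - Re (\<sigma> j a) * Re (t j))\<bar> < \<delta>"
    using real_embeddings_dense[OF \<open>\<delta> > 0\<close>, of "\<lambda>j. Re (z j) - Re (\<sigma> j a) * Re (t j)"] by blast
  \<comment> \<open>the last coordinate of the leaf is free, so it can be chosen to hit \<open>z s\<close> exactly\<close>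
  define w where "w = (\<lambda>j. if j < s then t j else if j = s then (z s - \<sigma> s b) / \<sigma> s a else 0)"
  define y where "y = gamma_act \<sigma> s a b w"
  have y_minus_z: "y j - z j = of_real (Re (\<sigma> j b) - (Re (z j) - Re (\<sigma> j a) * Re (t j)))"
    if j: "j < s" for j
  proof -
    obtain \<alpha> \<beta> where \<alpha>\<beta>: "\<sigma> j a = of_real \<alpha>" "\<sigma> j b = of_real \<beta>"
      using G_real_embedding[OF a(1) j] real_embedding[OF j] b(1) ring_of_integers_subset by blast
    have "y j = of_real \<alpha> * t j + of_real \<beta>"
      using j by (simp add: y_def w_def gamma_act_def \<alpha>\<beta>)
    then show ?thesis
      using a(2)[OF j] by (simp add: \<alpha>\<beta> complex_eq_iff)
  qed
  have y_eq_z: "y j = z j" if "s \<le> j" for j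
    using that z embedding_G_nonzero[OF a(1), of s] by (auto simp: y_def w_def gamma_act_def OT_domain_def)
  show ?thesis
  proof (rule that)
    show "w \<in> OT_domain s" "\<And>j. j < s \<Longrightarrow> w j = t j"
      using t by (auto simp: w_def OT_domain_def)
    show "\<pi> y = \<pi> w"
      unfolding y_def using a(1) b(1) by (rule OT_pi_gamma_act)
    show "dist (y j) (z j) < \<delta>" if "j < s" for j
      using b(2)[OF that] unfolding dist_norm y_minus_z[OF that] norm_of_real .
    show "y j = z j" if "s \<le> j" for j
      using y_eq_z that .
    have "Im (y j) = Im (z j)" if "j < s" for j
      using arg_cong[OF y_minus_z[OF that], of Im] by simp
    then show "y \<in> OT_domain s"
      using z y_eq_z by (auto simp: OT_domain_def)
  qed
qed

lemma OT_leaf_subset_fiber: "OT_leaf K \<sigma> s G t \<subseteq> OT_fiber K \<sigma> s G t"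
  unfolding OT_leaf_def OT_fiber_def
proof (rule image_mono, safe)
  fix z assume "z \<in> OT_domain s" "\<forall>j<s. z j = t j"
  then have "log_Im s z - log_Im s t = log_map \<sigma> s 1"
    using field_embedding_1[OF subfield embedding] by (auto simp: log_Im_def log_map_def fun_eq_iff)
  then show "log_Im s z - log_Im s t \<in> Lambda \<sigma> s G"
    unfolding Lambda_def using G_one by simp
qed

lemma OT_fiber_subset_closure_leaf:
  assumes t: "t \<in> OT_domain s"
  shows "OT_fiber K \<sigma> s G t \<subseteq> OT_topology K \<sigma> s G closure_of OT_leaf K \<sigma> s G t"
proof
  fix x assume "x \<in> OT_fiber K \<sigma> s G t"
  then obtain z where z: "z \<in> OT_domain s" "log_Im s z - log_Im s t \<in> Lambda \<sigma> s G" "x = \<pi> z"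
    unfolding OT_fiber_def by auto
  obtain a where a: "a \<in> G" "\<And>j. j < s \<Longrightarrow> Im (z j) = Re (\<sigma> j a) * Im (t j)"
    using fiber_scaling[OF t z(1,2)] by blast
  have "\<pi> z \<in> quotient_topology (top_of_set (OT_domain s)) \<pi> closure_of OT_leaf K \<sigma> s G t"
  proof (rule closure_of_quotient_topologyI)
    fix V assume "openin (top_of_set (OT_domain s)) V" "z \<in> V"
    then obtain V' where V': "open V'" "z \<in> V'" "V = OT_domain s \<inter> V'"
      by (auto simp: openin_open)
    obtain \<delta> where "\<delta> > 0" and box:
      "\<And>y. (\<And>j. j \<in> {..<s} \<Longrightarrow> dist (y j) (z j) < \<delta>) \<Longrightarrow> (\<And>j. j \<notin> {..<s} \<Longrightarrow> y j = z j) \<Longrightarrow> y \<in> V'"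
      using open_fun_contains_box[OF V'(1,2) finite_lessThan] by blast
    obtain w y where w: "w \<in> OT_domain s" "\<And>j. j < s \<Longrightarrow> w j = t j"
      and y: "y \<in> OT_domain s" "\<pi> y = \<pi> w"
      and close: "\<And>j. j < s \<Longrightarrow> dist (y j) (z j) < \<delta>" and far: "\<And>j. s \<le> j \<Longrightarrow> y j = z j"
      using leaf_approaches_fiber_point[OF t z(1) a \<open>\<delta> > 0\<close>] by blast
    have "y \<in> V'"
    proof (rule box)
      show "dist (y j) (z j) < \<delta>" if "j \<in> {..<s}" for j
        using close that by simp
      show "y j = z j" if "j \<notin> {..<s}" for j
        using far that by simp
    qed
    then have "y \<in> V"
      using y(1) V'(3) by blast
    moreover have "\<pi> y \<in> OT_leaf K \<sigma> s G t"
      unfolding OT_leaf_def y(2) using w by blast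
    ultimately show "\<exists>y\<in>V. \<pi> y \<in> OT_leaf K \<sigma> s G t"
      by blast
  qed (use z in simp)
  then show "x \<in> OT_topology K \<sigma> s G closure_of OT_leaf K \<sigma> s G t"
    using z(3) by (simp add: OT_topology_eq)
qed

end

theorem lemma2p1:
  fixes K :: "complex set" and \<sigma> :: "nat \<Rightarrow> complex \<Rightarrow> complex" and s :: nat
    and G :: "complex set" and t :: "nat \<Rightarrow> complex"
  assumes "OT_field K \<sigma> s"
    and "admissible K \<sigma> s G"
    and "t \<in> OT_domain s"
  shows "OT_leaf K \<sigma> s G t \<subseteq> OT_fiber K \<sigma> s G t \<and>
         OT_fiber K \<sigma> s G t \<subseteq> (OT_topology K \<sigma> s G) closure_of (OT_leaf K \<sigma> s G t)"
proof -
  interpret OT_manifold K \<sigma> s G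
    using assms(1,2) by unfold_locales
  show ?thesis
    using OT_leaf_subset_fiber OT_fiber_subset_closure_leaf[OF assms(3)] by blast
qed

end
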